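(* Let $P$ be the Borel probability measure on $\mathbb{R}$ with density $f(x)=(3/2)^m$ if $x\in J_m:=[1-\frac{1}{3^{m-1}},1-\frac{2}{3^m}]$ for some $m\in\mathbb{N}$, and $f(x)=0$ otherwise. Let $\alpha_n$ be an optimal set of $n$-means for $P$ with $n\ge4$. Then $\mathrm{card}(\alpha_n\cap J_1)\ge2$ and $\mathrm{card}(\alpha_n\cap[\frac23,1])\ge2$.
   Context: $\mathbb{N}=\{1,2,\dots\}$; $J_1=[0,\frac13]$. An optimal set of $n$-means for $P$ is a set $\alpha\subset\mathbb{R}$ with $\mathrm{card}(\alpha)\le n$ attaining $\inf\{\int\min_{a\in\alpha}(x-a)^2\,dP(x):\mathrm{card}(\alpha)\le n\}$. *)

theory Defs
  imports "HOL-Probability.Probability"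
begin

definition J :: "nat \<Rightarrow> real set" where
  "J m = {1 - 1 / 3 ^ (m - 1) .. 1 - 2 / 3 ^ m}"

text \<open>Density: (3/2)^m on J_m (m \<ge> 1), 0 elsewhere (the J_m are pairwise disjoint).\<close>
definition dens :: "real \<Rightarrow> real" where
  "dens x = (if \<exists>m\<ge>1. x \<in> J m then (3/2) ^ (LEAST m. m \<ge> 1 \<and> x \<in> J m) else 0)"

definition P :: "real measure" where
  "P = density lborel (\<lambda>x. ennreal (dens x))"

definition distortion :: "real measure \<Rightarrow> real set \<Rightarrow> real" where
  "distortion M \<alpha> = (\<integral>x. Min ((\<lambda>a. (x - a)\<^sup>2) ` \<alpha>) \<partial>M)"

definition optimal_n_means :: "real measure \<Rightarrow> nat \<Rightarrow> real set \<Rightarrow> bool" where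
  "optimal_n_means M n \<alpha> \<longleftrightarrow>
     finite \<alpha> \<and> \<alpha> \<noteq> {} \<and> card \<alpha> \<le> n \<and>
     (\<forall>\<beta>. finite \<beta> \<and> \<beta> \<noteq> {} \<and> card \<beta> \<le> n \<longrightarrow> distortion M \<alpha> \<le> distortion M \<beta>)"

end

theory Submission
  imports Defs
begin

text \<open>Two kinds of competitors are compared with an optimal set \<open>\<alpha>\<close>. Locally, a point of
  \<open>\<alpha>\<close> outside \<open>[0,1/3] \<union> [2/3,1]\<close> can either be moved to the nearest end of a gap of the
  support, or it is redundant and may be traded for a new point inside \<open>J\<^sub>1\<close>; both strictly
  decrease the distortion. Globally, the four points \<open>1/12, 1/4, 13/18, 17/18\<close> have distortion at
  most \<open>17/7776\<close>. If \<open>J\<^sub>1\<close> or \<open>[2/3,1]\<close> contained at most one point of \<open>\<alpha>\<close>, a single point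
  would be nearest to all of that region, and integrating the squared distance to it over
  \<open>J\<^sub>1\<close>, resp. \<open>J\<^sub>2 \<union> J\<^sub>3\<close>, already exceeds \<open>17/7776\<close>.\<close>

section \<open>The density and its support\<close>

lemma J_disjoint:
  assumes "k < m" "x \<in> J k" shows "x \<notin> J m"
proof
  assume "x \<in> J m"
  have "(3::real) ^ k \<le> 3 ^ (m - 1)" using assms by (intro power_increasing) auto
  then have "1 / 3 ^ (m - 1) \<le> (1::real) / 3 ^ k" by (intro frac_le) auto
  moreover have "(2::real) / 3 ^ k = 2 * (1 / 3 ^ k)" "0 < (1::real) / 3 ^ k" by simp_all
  moreover have "1 - 1 / 3 ^ (m - 1) \<le> x" "x \<le> 1 - 2 / 3 ^ k"
    using \<open>x \<in> J m\<close> \<open>x \<in> J k\<close> unfolding J_def by auto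
  ultimately show False by linarith
qed

lemma dens_J: assumes "1 \<le> m" "x \<in> J m" shows "dens x = (3/2) ^ m"
proof -
  have "(LEAST k. 1 \<le> k \<and> x \<in> J k) = m"
    using assms J_disjoint by (intro Least_equality) (auto simp: not_le[symmetric])
  then show ?thesis using assms unfolding dens_def by auto
qed

definition Jset :: "real set" where
  "Jset = (\<Union>m\<in>{1..}. J m)"

lemma dens_nonneg: "0 \<le> dens x"
  by (simp add: dens_def)

lemma dens_eq_0: "x \<notin> Jset \<Longrightarrow> dens x = 0"
  by (auto simp: dens_def Jset_def)

lemma borel_measurable_dens [measurable]: "dens \<in> borel_measurable borel"
  unfolding dens_def J_def by measurable

lemma J_1: "J 1 = {0..1/3}" and J_2: "J 2 = {2/3..7/9}" and J_3: "J 3 = {8/9..25/27}"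
  by (simp_all add: J_def)

lemma J_subset_ge_3: assumes "3 \<le> m" shows "J m \<subseteq> {8/9..1}"
proof -
  have "(3::real) ^ 2 \<le> 3 ^ (m - 1)" using assms by (intro power_increasing) auto
  then have "1 / 3 ^ (m - 1) \<le> (1::real) / 9" by (simp add: frac_le)
  then show ?thesis unfolding J_def by auto
qed

lemma Jset_subset: "Jset \<subseteq> {0..1/3} \<union> {2/3..1}"
proof
  fix x assume "x \<in> Jset"
  then obtain m where m: "1 \<le> m" "x \<in> J m" unfolding Jset_def by auto
  then consider "m = 1" | "m = 2" | "3 \<le> m" by linarith
  then show "x \<in> {0..1/3} \<union> {2/3..1}"
  proof cases
    case 3
    then show ?thesis using m J_subset_ge_3[of m] by auto
  qed (use m J_1 J_2 in auto)
qed

lemma emeasure_J: "1 \<le> m \<Longrightarrow> emeasure lborel (J m) = ennreal ((1/3) ^ m)"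
  by (cases m) (auto simp: J_def field_simps power_divide)

lemma set_nn_integral_dens_Icc:
  fixes f F :: "real \<Rightarrow> real"
  assumes "1 \<le> m" "{u..v} \<subseteq> J m" "u \<le> v"
    and "f \<in> borel_measurable borel"
    and "\<And>x. x \<in> {u..v} \<Longrightarrow> (F has_real_derivative f x) (at x)"
    and "\<And>x. x \<in> {u..v} \<Longrightarrow> 0 \<le> f x"
  shows "(\<integral>\<^sup>+x\<in>{u..v}. ennreal (dens x * f x) \<partial>lborel) = ennreal ((3/2) ^ m * (F v - F u))"
proof -
  have "(\<integral>\<^sup>+x\<in>{u..v}. ennreal (dens x * f x) \<partial>lborel)
      = (\<integral>\<^sup>+x. ennreal ((3/2) ^ m) * (ennreal (f x) * indicator {u..v} x) \<partial>lborel)"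
    using assms by (intro nn_integral_cong) (auto simp: dens_J ennreal_mult split: split_indicator)
  also have "\<dots> = ennreal ((3/2) ^ m) * (\<integral>\<^sup>+x. ennreal (f x) * indicator {u..v} x \<partial>lborel)"
    by (rule nn_integral_cmult) (use assms in measurable)
  also have "(\<integral>\<^sup>+x. ennreal (f x) * indicator {u..v} x \<partial>lborel) = ennreal (F v - F u)"
    using assms by (intro nn_integral_FTC_Icc) auto
  finally show ?thesis by (simp add: ennreal_mult')
qed

lemma set_nn_integral_dens_sq:
  assumes "1 \<le> m" "{u..v} \<subseteq> J m" "u \<le> v"
  shows "(\<integral>\<^sup>+x\<in>{u..v}. ennreal (dens x * (x - c)\<^sup>2) \<partial>lborel)
       = ennreal ((3/2) ^ m * ((v - c) ^ 3 - (u - c) ^ 3) / 3)"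
proof -
  have "(\<integral>\<^sup>+x\<in>{u..v}. ennreal (dens x * (x - c)\<^sup>2) \<partial>lborel)
      = ennreal ((3/2) ^ m * ((v - c) ^ 3 / 3 - (u - c) ^ 3 / 3))"
    by (rule set_nn_integral_dens_Icc[OF assms])
      (auto intro!: derivative_eq_intros simp: power2_eq_square)
  then show ?thesis by (simp add: field_simps)
qed

lemma ennreal_term_le_suminf: "(f :: nat \<Rightarrow> ennreal) j \<le> (\<Sum>i. f i)"
  using sum_le_suminf[of f "{j}"] by simp

lemma set_nn_integral_dens_tail:
  assumes "1 \<le> k"
  shows "(\<integral>\<^sup>+x\<in>(\<Union>m\<in>{k..}. J m). ennreal (dens x) \<partial>lborel) \<le> ennreal (2 * (1/2) ^ k)"
proof -
  have "ennreal (dens x) * indicator (\<Union>m\<in>{k..}. J m) x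
      \<le> (\<Sum>i. ennreal ((3/2) ^ (i + k)) * indicator (J (i + k)) x)" for x
  proof (cases "x \<in> (\<Union>m\<in>{k..}. J m)")
    case True
    then obtain j where j: "k \<le> j" "x \<in> J j" by auto
    have "ennreal (dens x) * indicator (\<Union>m\<in>{k..}. J m) x
        = ennreal ((3/2) ^ ((j - k) + k)) * indicator (J ((j - k) + k)) x"
      using j True assms dens_J[of j x] by simp
    also have "\<dots> \<le> (\<Sum>i. ennreal ((3/2) ^ (i + k)) * indicator (J (i + k)) x)"
      by (rule ennreal_term_le_suminf)
    finally show ?thesis .
  qed simp
  then have "(\<integral>\<^sup>+x\<in>(\<Union>m\<in>{k..}. J m). ennreal (dens x) \<partial>lborel)
      \<le> (\<integral>\<^sup>+x. (\<Sum>i. ennreal ((3/2) ^ (i + k)) * indicator (J (i + k)) x) \<partial>lborel)"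
    by (rule nn_integral_mono)
  also have "\<dots> = (\<Sum>i. \<integral>\<^sup>+x. ennreal ((3/2) ^ (i + k)) * indicator (J (i + k)) x \<partial>lborel)"
    by (rule nn_integral_suminf) (auto simp: J_def)
  also have "\<dots> = (\<Sum>i. ennreal ((3/2) ^ (i + k)) * emeasure lborel (J (i + k)))"
    by (intro suminf_cong nn_integral_cmult_indicator) (simp add: J_def)
  also have "\<dots> = (\<Sum>i. ennreal ((1/2) ^ k * (1/2) ^ i))"
  proof (rule suminf_cong)
    fix i
    have "(3/2::real) ^ (i + k) * (1/3) ^ (i + k) = (1/2) ^ k * (1/2) ^ i"
      unfolding power_mult_distrib[symmetric] by (simp add: power_add)
    then show "ennreal ((3/2) ^ (i + k)) * emeasure lborel (J (i + k)) = ennreal ((1/2) ^ k * (1/2) ^ i)"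
      using assms by (simp add: emeasure_J ennreal_mult'[symmetric])
  qed
  also have "\<dots> = ennreal (\<Sum>i. (1/2) ^ k * (1/2::real) ^ i)"
    by (intro suminf_ennreal2) (auto intro: summable_mult)
  also have "(\<Sum>i. (1/2) ^ k * (1/2::real) ^ i) = 2 * (1/2) ^ k"
    by (subst suminf_mult) (auto simp: suminf_geometric)
  finally show ?thesis .
qed

lemma emeasure_P_UNIV_le: "emeasure P UNIV \<le> 1"
proof -
  have "emeasure P UNIV = (\<integral>\<^sup>+x. ennreal (dens x) \<partial>lborel)"
    unfolding P_def by (simp add: emeasure_density)
  also have "\<dots> = (\<integral>\<^sup>+x\<in>(\<Union>m\<in>{1..}. J m). ennreal (dens x) \<partial>lborel)"
    by (intro nn_integral_cong) (auto simp: dens_eq_0 Jset_def split: split_indicator)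
  also have "\<dots> \<le> 1"
    using set_nn_integral_dens_tail[of 1] by simp
  finally show ?thesis .
qed

lemma sq_dist_le_of_midpoint_le:
  fixes a b x :: real assumes "a \<le> b" "(a + b)/2 \<le> x" shows "(x - b)\<^sup>2 \<le> (x - a)\<^sup>2"
proof -
  have "0 \<le> (b - a) * (2 * x - a - b)" using assms by simp
  then show ?thesis by (simp add: power2_eq_square algebra_simps)
qed

lemma sq_dist_le_of_le_midpoint:
  fixes a b x :: real assumes "a \<le> b" "x \<le> (a + b)/2" shows "(x - a)\<^sup>2 \<le> (x - b)\<^sup>2"
  using sq_dist_le_of_midpoint_le[of "-b" "-a" "-x"] assms by (simp add: power2_commute)

lemma dominating_point_exists:
  fixes \<alpha> :: "real set" and l r :: real
  assumes "finite \<alpha>" "l \<le> r" "card (\<alpha> \<inter> {l..r}) \<le> 1"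
    and far: "\<And>a. a \<in> \<alpha> \<Longrightarrow> a \<notin> {l..r} \<Longrightarrow> a \<le> 2*l - r \<or> 2*r - l \<le> a"
  obtains b where "\<And>x a. x \<in> {l..r} \<Longrightarrow> a \<in> \<alpha> \<Longrightarrow> (x - b)\<^sup>2 \<le> (x - a)\<^sup>2"
proof -
  obtain b where b: "b \<in> {l..r}" "\<alpha> \<inter> {l..r} \<subseteq> {b}"
  proof (cases "\<alpha> \<inter> {l..r} = {}")
    case True
    then show ?thesis using that[of l] assms(2) by auto
  next
    case False
    then have "card (\<alpha> \<inter> {l..r}) = 1" using assms(1,3) by (simp add: le_Suc_eq)
    then obtain b where b: "\<alpha> \<inter> {l..r} = {b}" by (rule card_1_singletonE)
    then have "b \<in> {l..r}" by blast
    then show ?thesis using that[of b] b by blast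
  qed
  show ?thesis
  proof (rule that)
    fix x a assume x: "x \<in> {l..r}" and a: "a \<in> \<alpha>"
    show "(x - b)\<^sup>2 \<le> (x - a)\<^sup>2"
    proof (cases "a \<in> {l..r}")
      case True
      then show ?thesis using a b(2) by auto
    next
      case False
      have "\<bar>x - b\<bar> \<le> r - l" using x b(1) by (intro abs_leI) auto
      also have "r - l \<le> \<bar>x - a\<bar>" using far[OF a False] x by auto
      finally show ?thesis by (simp add: abs_le_square_iff)
    qed
  qed
qed

lemma card_insert_Diff_le: "finite A \<Longrightarrow> a \<in> A \<Longrightarrow> card (insert t (A - {a})) \<le> card A"
proof -
  assume "finite A" "a \<in> A"
  then have "card (A - {a}) = card A - 1" "0 < card A" by (auto simp: card_gt_0_iff)
  then show ?thesis using card_insert_le_m1[of "card A" "A - {a}" t] by linarith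
qed

section \<open>Quantization error\<close>

definition min_sqdist :: "real set \<Rightarrow> real \<Rightarrow> real" where
  "min_sqdist \<alpha> x = Min ((\<lambda>a. (x - a)\<^sup>2) ` \<alpha>)"

text \<open>The distortion of \<open>P\<close> as an \<open>ennreal\<close> integral against \<open>lborel\<close>, which needs no
  integrability side conditions.\<close>

definition nn_distortion :: "real set \<Rightarrow> ennreal" where
  "nn_distortion \<alpha> = (\<integral>\<^sup>+x. ennreal (dens x * min_sqdist \<alpha> x) \<partial>lborel)"

lemma borel_measurable_min_sqdist [measurable]:
  "finite \<alpha> \<Longrightarrow> min_sqdist \<alpha> \<in> borel_measurable borel"
  unfolding min_sqdist_def by measurable

lemma min_sqdist_le: "finite \<alpha> \<Longrightarrow> a \<in> \<alpha> \<Longrightarrow> min_sqdist \<alpha> x \<le> (x - a)\<^sup>2"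
  unfolding min_sqdist_def by (rule Min_le) auto

lemma min_sqdist_greatest:
  "finite \<alpha> \<Longrightarrow> \<alpha> \<noteq> {} \<Longrightarrow> (\<And>a. a \<in> \<alpha> \<Longrightarrow> L \<le> (x - a)\<^sup>2) \<Longrightarrow> L \<le> min_sqdist \<alpha> x"
  unfolding min_sqdist_def by (subst Min_ge_iff) auto

lemma min_sqdist_nonneg: "finite \<alpha> \<Longrightarrow> \<alpha> \<noteq> {} \<Longrightarrow> 0 \<le> min_sqdist \<alpha> x"
  by (rule min_sqdist_greatest) auto

lemma min_sqdist_attained:
  assumes "finite \<alpha>" "\<alpha> \<noteq> {}"
  obtains a where "a \<in> \<alpha>" "min_sqdist \<alpha> x = (x - a)\<^sup>2"
proof -
  have "min_sqdist \<alpha> x \<in> (\<lambda>a. (x - a)\<^sup>2) ` \<alpha>"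
    unfolding min_sqdist_def using assms by (intro Min_in) auto
  then show ?thesis using that by blast
qed

lemma min_sqdist_le_of_cover:
  assumes "finite \<alpha>" "\<alpha> \<noteq> {}" "finite \<beta>" "\<alpha> - {a} \<subseteq> \<beta>"
    and "b \<in> \<beta>" "(x - b)\<^sup>2 \<le> (x - a)\<^sup>2"
  shows "min_sqdist \<beta> x \<le> min_sqdist \<alpha> x"
proof -
  obtain a' where a': "a' \<in> \<alpha>" "min_sqdist \<alpha> x = (x - a')\<^sup>2"
    using min_sqdist_attained[OF assms(1,2)] .
  show ?thesis
  proof (cases "a' = a")
    case True
    then show ?thesis using assms(3,5,6) a' min_sqdist_le[of \<beta> b x] by simp
  next
    case False
    then show ?thesis using assms(3,4) a' min_sqdist_le[of \<beta> a' x] by auto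
  qed
qed

lemma nn_distortion_finite:
  assumes "finite \<alpha>" "\<alpha> \<noteq> {}" shows "nn_distortion \<alpha> < \<top>"
proof -
  obtain a where a: "a \<in> \<alpha>" using assms by auto
  define C where "C = (1 + \<bar>a\<bar>)\<^sup>2"
  have "ennreal (dens x * min_sqdist \<alpha> x) \<le> ennreal (C * dens x)" for x
  proof (cases "x \<in> Jset")
    case True
    then have "0 \<le> x" "x \<le> 1" using Jset_subset by auto
    then have "\<bar>x - a\<bar> \<le> 1 + \<bar>a\<bar>" by (simp add: abs_if)
    then have "(x - a)\<^sup>2 \<le> C"
      unfolding C_def by (metis abs_le_square_iff abs_of_nonneg abs_ge_zero order.trans)
    then have "min_sqdist \<alpha> x \<le> C"
      using min_sqdist_le[OF assms(1) a, of x] by simp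
    then show ?thesis
      using dens_nonneg[of x] by (intro ennreal_leI) (simp add: mult.commute[of C] mult_left_mono)
  qed (simp add: dens_eq_0)
  then have "nn_distortion \<alpha> \<le> (\<integral>\<^sup>+x. ennreal (C * dens x) \<partial>lborel)"
    unfolding nn_distortion_def by (rule nn_integral_mono)
  also have "\<dots> = ennreal C * emeasure P UNIV"
    unfolding P_def C_def
    by (simp add: ennreal_mult dens_nonneg nn_integral_cmult emeasure_density)
  also have "\<dots> < \<top>"
    using emeasure_P_UNIV_le by (simp add: ennreal_mult_less_top order.strict_trans1)
  finally show ?thesis .
qed

lemma distortion_P_eq:
  assumes "finite \<alpha>" "\<alpha> \<noteq> {}" shows "distortion P \<alpha> = enn2real (nn_distortion \<alpha>)"
proof -
  have "distortion P \<alpha> = enn2real (\<integral>\<^sup>+x. ennreal (min_sqdist \<alpha> x) \<partial>P)"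
    unfolding distortion_def min_sqdist_def[symmetric]
    by (rule integral_eq_nn_integral) (use assms min_sqdist_nonneg in \<open>auto simp: P_def\<close>)
  also have "(\<integral>\<^sup>+x. ennreal (min_sqdist \<alpha> x) \<partial>P) = nn_distortion \<alpha>"
    unfolding P_def nn_distortion_def using assms
    by (subst nn_integral_density) (auto simp: ennreal_mult' dens_nonneg)
  finally show ?thesis .
qed

lemma nn_distortion_mono:
  assumes "\<And>x. x \<in> Jset \<Longrightarrow> min_sqdist \<beta> x \<le> min_sqdist \<alpha> x"
  shows "nn_distortion \<beta> \<le> nn_distortion \<alpha>"
  unfolding nn_distortion_def
  using assms dens_nonneg dens_eq_0 by (intro nn_integral_mono ennreal_leI) (metis mult_left_mono mult_zero_left)

lemma nn_distortion_ge:
  assumes "\<And>x. x \<in> S \<Longrightarrow> g x \<le> min_sqdist \<alpha> x"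
  shows "(\<integral>\<^sup>+x\<in>S. ennreal (dens x * g x) \<partial>lborel) \<le> nn_distortion \<alpha>"
  unfolding nn_distortion_def
  using assms dens_nonneg
  by (intro nn_integral_mono) (auto intro!: ennreal_leI mult_left_mono split: split_indicator)

lemma nn_distortion_less:
  assumes "finite \<beta>" "\<beta> \<noteq> {}"
    and "\<And>x. x \<in> Jset \<Longrightarrow> min_sqdist \<beta> x \<le> min_sqdist \<alpha> x"
    and "1 \<le> m" "{u..v} \<subseteq> J m" "u < v" "0 < \<delta>"
    and "\<And>x. x \<in> {u..v} \<Longrightarrow> min_sqdist \<beta> x + \<delta> \<le> min_sqdist \<alpha> x"
  shows "nn_distortion \<beta> < nn_distortion \<alpha>"
proof -
  let ?gain = "\<integral>\<^sup>+x\<in>{u..v}. ennreal (dens x * \<delta>) \<partial>lborel"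
  have "?gain = ennreal ((3/2) ^ m * (\<delta> * v - \<delta> * u))"
    using assms by (intro set_nn_integral_dens_Icc) (auto intro!: derivative_eq_intros)
  moreover have "0 < (3/2::real) ^ m * (\<delta> * v - \<delta> * u)"
    using assms by (simp add: right_diff_distrib[symmetric])
  ultimately have "nn_distortion \<beta> < nn_distortion \<beta> + ?gain"
    using nn_distortion_finite[OF assms(1,2)] by (simp add: ennreal_add_left_cancel_less)
  also have "\<dots> = (\<integral>\<^sup>+x. ennreal (dens x * min_sqdist \<beta> x) + ennreal (dens x * \<delta>) * indicator {u..v} x \<partial>lborel)"
    unfolding nn_distortion_def using assms(1) by (intro nn_integral_add[symmetric]) auto
  also have "\<dots> \<le> nn_distortion \<alpha>"
    unfolding nn_distortion_def
  proof (intro nn_integral_mono)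
    fix x
    show "ennreal (dens x * min_sqdist \<beta> x) + ennreal (dens x * \<delta>) * indicator {u..v} x
        \<le> ennreal (dens x * min_sqdist \<alpha> x)"
    proof (cases "x \<in> {u..v}")
      case True
      then have "dens x * min_sqdist \<beta> x + dens x * \<delta> \<le> dens x * min_sqdist \<alpha> x"
        using assms(8) dens_nonneg[of x] by (simp add: distrib_left[symmetric] mult_left_mono)
      then show ?thesis
        using True assms(1,2,7) dens_nonneg[of x] min_sqdist_nonneg
        by (simp add: ennreal_plus[symmetric] ennreal_leI del: ennreal_plus)
    next
      case False
      then show ?thesis
        using assms(3) dens_nonneg[of x] dens_eq_0[of x]
        by (cases "x \<in> Jset") (auto intro!: ennreal_leI mult_left_mono)
    qed
  qed
  finally show ?thesis .
qed

lemma nn_distortion_insert_less: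
  assumes "finite \<beta>" "\<beta> \<noteq> {}"
  obtains p where "nn_distortion (insert p \<beta>) < nn_distortion \<beta>"
proof -
  have "infinite ({0<..<1/3::real} - \<beta>)"
    using assms(1) by (intro Diff_infinite_finite) auto
  then obtain p where p: "p \<in> {0<..<1/3}" "p \<notin> \<beta>"
    by (metis Diff_iff ex_in_conv finite.emptyI)
  define r where "r = min (infdist p \<beta>) (min p (1/3 - p))"
  have "0 < infdist p \<beta>"
    using assms p by (intro infdist_pos_not_in_closed) (auto simp: finite_imp_closed)
  then have r: "0 < r" "r \<le> p" "r \<le> 1/3 - p" using p unfolding r_def by auto
  have far: "r \<le> \<bar>p - a\<bar>" if "a \<in> \<beta>" for a
    using infdist_le[OF that, of p] unfolding r_def dist_real_def by linarith
  have "nn_distortion (insert p \<beta>) < nn_distortion \<beta>"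
  proof (rule nn_distortion_less[where m = 1 and u = "p - r/4" and v = "p + r/4" and \<delta> = "r\<^sup>2/2"])
    fix x
    show "min_sqdist (insert p \<beta>) x \<le> min_sqdist \<beta> x"
      using assms by (intro min_sqdist_greatest min_sqdist_le) auto
  next
    fix x assume "x \<in> {p - r/4..p + r/4}"
    then have dxp: "\<bar>x - p\<bar> \<le> r/4" by (intro abs_leI) auto
    have "min_sqdist (insert p \<beta>) x \<le> (x - p)\<^sup>2" using assms by (intro min_sqdist_le) auto
    also have "\<dots> \<le> (r/4)\<^sup>2" using power_mono[OF dxp, of 2] by simp
    finally have near: "min_sqdist (insert p \<beta>) x \<le> (r/4)\<^sup>2" .
    have "(3*r/4)\<^sup>2 \<le> min_sqdist \<beta> x"
    proof (rule min_sqdist_greatest[OF assms])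
      fix a assume "a \<in> \<beta>"
      then have "3*r/4 \<le> \<bar>x - a\<bar>"
        using abs_triangle_ineq[of "p - x" "x - a"] far[of a] dxp by (simp add: abs_minus_commute)
      then show "(3*r/4)\<^sup>2 \<le> (x - a)\<^sup>2" using power_mono[of "3*r/4" "\<bar>x - a\<bar>" 2] r by simp
    qed
    then show "min_sqdist (insert p \<beta>) x + r\<^sup>2/2 \<le> min_sqdist \<beta> x"
      using near by (simp add: power2_eq_square)
  next
    show "{p - r/4..p + r/4} \<subseteq> J 1" using r unfolding J_1 by auto
  qed (use assms r in auto)
  then show ?thesis by (rule that)
qed

text \<open>The bound \<open>17/7776\<close> lies below all lower bounds derived later for an optimal set with too
  few points in some region, the smallest of which is \<open>1/432\<close>.\<close>

lemma nn_distortion_four_points_le: "nn_distortion {1/12, 1/4, 13/18, 17/18} \<le> ennreal (17/7776)"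
proof -
  define \<beta> :: "real set" where "\<beta> = {1/12, 1/4, 13/18, 17/18}"
  define T where "T = (\<Union>m\<in>{3..}. J m)"
  have [measurable]: "T \<in> sets borel" unfolding T_def J_def by (intro sets.countable_UN') auto
  define G where "G x =
      ennreal (dens x * (x - 1/12)\<^sup>2) * indicator {0..1/6} x
    + ennreal (dens x * (x - 1/4)\<^sup>2) * indicator {1/6..1/3} x
    + ennreal (dens x * (x - 13/18)\<^sup>2) * indicator {2/3..7/9} x
    + ennreal (1/324) * (ennreal (dens x) * indicator T x)" for x
  have G_ge: "ennreal (dens x * min_sqdist \<beta> x) \<le> G x" for x
  proof (cases "x \<in> Jset")
    case True
    then obtain m where m: "1 \<le> m" "x \<in> J m" unfolding Jset_def by auto
    have le: "ennreal (dens x * min_sqdist \<beta> x) \<le> ennreal (dens x * (x - b)\<^sup>2)" if "b \<in> \<beta>" for b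
      using that dens_nonneg[of x] min_sqdist_le[of \<beta> b x]
      by (intro ennreal_leI mult_left_mono) (auto simp: \<beta>_def)
    consider "m = 1" "x \<le> 1/6" | "m = 1" "1/6 < x" | "m = 2" | "3 \<le> m" using m(1) by linarith
    then show ?thesis
    proof cases
      case 1
      then have "x \<in> {0..1/6}" using m(2) J_1 by auto
      then show ?thesis
        using le[of "1/12"] by (simp add: \<beta>_def G_def add_increasing add_increasing2)
    next
      case 2
      then have "x \<in> {1/6..1/3}" using m(2) J_1 by auto
      then show ?thesis
        using le[of "1/4"] by (simp add: \<beta>_def G_def add_increasing add_increasing2)
    next
      case 3
      then have "x \<in> {2/3..7/9}" using m(2) J_2 by auto
      then show ?thesis
        using le[of "13/18"] by (simp add: \<beta>_def G_def add_increasing add_increasing2)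
    next
      case 4
      then have "x \<in> {8/9..1}" "x \<in> T" using m J_subset_ge_3[of m] unfolding T_def by auto
      then have "\<bar>x - 17/18\<bar> \<le> 1/18" by (intro abs_leI) auto
      then have "\<bar>x - 17/18\<bar>\<^sup>2 \<le> (1/18)\<^sup>2" by (rule power_mono) simp
      then have "(x - 17/18)\<^sup>2 \<le> 1/324" by (simp add: power2_eq_square)
      then have "dens x * (x - 17/18)\<^sup>2 \<le> dens x * (1/324)"
        using dens_nonneg[of x] by (rule mult_left_mono)
      then have "ennreal (dens x * (x - 17/18)\<^sup>2) \<le> ennreal (1/324) * ennreal (dens x)"
        by (simp add: ennreal_mult'[symmetric] ennreal_leI dens_nonneg mult.commute)
      then show ?thesis
        using le[of "17/18"] \<open>x \<in> T\<close> by (simp add: \<beta>_def G_def add_increasing)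
    qed
  qed (simp add: dens_eq_0)
  then have "nn_distortion \<beta> \<le> (\<integral>\<^sup>+x. G x \<partial>lborel)"
    unfolding nn_distortion_def by (rule nn_integral_mono)
  moreover have "(\<integral>\<^sup>+x\<in>{0..1/6}. ennreal (dens x * (x - 1/12)\<^sup>2) \<partial>lborel) = ennreal (1/1728)"
    "(\<integral>\<^sup>+x\<in>{1/6..1/3}. ennreal (dens x * (x - 1/4)\<^sup>2) \<partial>lborel) = ennreal (1/1728)"
    by (subst set_nn_integral_dens_sq[where m = 1]; force simp: J_def power3_eq_cube)+
  moreover have "(\<integral>\<^sup>+x\<in>{2/3..7/9}. ennreal (dens x * (x - 13/18)\<^sup>2) \<partial>lborel) = ennreal (1/3888)"
    by (subst set_nn_integral_dens_sq[where m = 2]) (auto simp: J_2 power3_eq_cube power2_eq_square)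
  ultimately have "nn_distortion \<beta> \<le> ennreal (1/1728) + ennreal (1/1728) + ennreal (1/3888)
      + ennreal (1/324) * (\<integral>\<^sup>+x\<in>T. ennreal (dens x) \<partial>lborel)"
    unfolding G_def by (simp add: nn_integral_add nn_integral_cmult)
  also have "ennreal (1/324) * (\<integral>\<^sup>+x\<in>T. ennreal (dens x) \<partial>lborel) \<le> ennreal (1/324) * ennreal (1/4)"
    using set_nn_integral_dens_tail[of 3] unfolding T_def by (intro mult_left_mono) (auto simp: power3_eq_cube)
  also have "ennreal (1/1728) + ennreal (1/1728) + ennreal (1/3888) + ennreal (1/324) * ennreal (1/4)
      = ennreal (17/7776)"
    by (simp add: ennreal_mult'[symmetric] ennreal_plus[symmetric] del: ennreal_plus)
  finally show ?thesis by (simp add: \<beta>_def)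
qed

section \<open>Consequences of optimality\<close>

lemma optimal_nn_distortion_le:
  assumes opt: "optimal_n_means P n \<alpha>" and "finite \<beta>" "\<beta> \<noteq> {}" "card \<beta> \<le> n"
  shows "nn_distortion \<alpha> \<le> nn_distortion \<beta>"
proof -
  have \<alpha>: "finite \<alpha>" "\<alpha> \<noteq> {}" using opt unfolding optimal_n_means_def by auto
  have "distortion P \<alpha> \<le> distortion P \<beta>"
    using opt assms(2-4) unfolding optimal_n_means_def by blast
  then have "ennreal (enn2real (nn_distortion \<alpha>)) \<le> ennreal (enn2real (nn_distortion \<beta>))"
    by (intro ennreal_leI) (simp add: distortion_P_eq \<alpha> assms(2,3))
  then show ?thesis
    unfolding ennreal_enn2real[OF nn_distortion_finite[OF \<alpha>]]
      ennreal_enn2real[OF nn_distortion_finite[OF assms(2,3)]] .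
qed

lemma optimal_nn_distortion_le_bound:
  assumes "optimal_n_means P n \<alpha>" "4 \<le> n"
  shows "nn_distortion \<alpha> \<le> ennreal (17/7776)"
  using optimal_nn_distortion_le[OF assms(1), of "{1/12, 1/4, 13/18, 17/18}"] assms(2)
    nn_distortion_four_points_le by simp

lemma optimal_dominated_interval_bound:
  assumes opt: "optimal_n_means P n \<alpha>" "4 \<le> n"
    and "1 \<le> m" "{u..v} \<subseteq> J m" "u \<le> v"
    and dom: "\<And>x a. x \<in> {u..v} \<Longrightarrow> a \<in> \<alpha> \<Longrightarrow> (x - b)\<^sup>2 \<le> (x - a)\<^sup>2"
  shows "(3/2) ^ m * ((v - b) ^ 3 - (u - b) ^ 3) / 3 \<le> 17/7776"
proof -
  have \<alpha>: "finite \<alpha>" "\<alpha> \<noteq> {}" using opt unfolding optimal_n_means_def by auto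
  have "ennreal ((3/2) ^ m * ((v - b) ^ 3 - (u - b) ^ 3) / 3)
      = (\<integral>\<^sup>+x\<in>{u..v}. ennreal (dens x * (x - b)\<^sup>2) \<partial>lborel)"
    using assms(3-5) by (rule set_nn_integral_dens_sq[symmetric])
  also have "\<dots> \<le> nn_distortion \<alpha>"
    using \<alpha> dom by (intro nn_distortion_ge min_sqdist_greatest)
  also have "\<dots> \<le> ennreal (17/7776)"
    using opt by (rule optimal_nn_distortion_le_bound)
  finally show ?thesis by (simp add: ennreal_le_iff)
qed

lemma optimal_point_not_replaceable:
  assumes opt: "optimal_n_means P n \<alpha>" and a: "a \<in> \<alpha>"
    and cover: "\<And>x. x \<in> Jset \<Longrightarrow> \<exists>b\<in>insert t (\<alpha> - {a}). (x - b)\<^sup>2 \<le> (x - a)\<^sup>2"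
    and "1 \<le> m" "{u..v} \<subseteq> J m" "u < v" "0 < \<delta>"
    and nearest: "\<And>x a'. x \<in> {u..v} \<Longrightarrow> a' \<in> \<alpha> \<Longrightarrow> (x - a)\<^sup>2 \<le> (x - a')\<^sup>2"
    and gain: "\<And>x. x \<in> {u..v} \<Longrightarrow> (x - t)\<^sup>2 + \<delta> \<le> (x - a)\<^sup>2"
  shows False
proof -
  have \<alpha>: "finite \<alpha>" "\<alpha> \<noteq> {}" "card \<alpha> \<le> n" using opt unfolding optimal_n_means_def by auto
  define \<beta> where "\<beta> = insert t (\<alpha> - {a})"
  have \<beta>: "finite \<beta>" "\<beta> \<noteq> {}" "card \<beta> \<le> n"
    using \<alpha> card_insert_Diff_le[OF \<alpha>(1) a, of t] unfolding \<beta>_def by auto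
  have "nn_distortion \<beta> < nn_distortion \<alpha>"
  proof (rule nn_distortion_less[OF \<beta>(1,2) _ assms(4-7)])
    fix x assume "x \<in> Jset"
    then show "min_sqdist \<beta> x \<le> min_sqdist \<alpha> x"
      using cover \<alpha> \<beta> min_sqdist_le_of_cover unfolding \<beta>_def by blast
  next
    fix x assume x: "x \<in> {u..v}"
    have "min_sqdist \<beta> x \<le> (x - t)\<^sup>2" using \<beta> by (intro min_sqdist_le) (auto simp: \<beta>_def)
    moreover have "(x - a)\<^sup>2 \<le> min_sqdist \<alpha> x" using \<alpha> nearest[OF x] by (intro min_sqdist_greatest)
    ultimately show "min_sqdist \<beta> x + \<delta> \<le> min_sqdist \<alpha> x" using gain[OF x] by simp
  qed
  then show False using optimal_nn_distortion_le[OF opt \<beta>] by simp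
qed

lemma optimal_point_not_redundant:
  assumes opt: "optimal_n_means P n \<alpha>" and a: "a \<in> \<alpha>"
    and cover: "\<And>x. x \<in> Jset \<Longrightarrow> \<exists>b\<in>\<alpha> - {a}. (x - b)\<^sup>2 \<le> (x - a)\<^sup>2"
  shows False
proof -
  have \<alpha>: "finite \<alpha>" "\<alpha> \<noteq> {}" "card \<alpha> \<le> n" using opt unfolding optimal_n_means_def by auto
  define \<beta> where "\<beta> = \<alpha> - {a}"
  have "0 \<in> Jset" unfolding Jset_def using J_1 by auto
  then have \<beta>: "finite \<beta>" "\<beta> \<noteq> {}" using \<alpha> cover unfolding \<beta>_def by auto
  have le: "nn_distortion \<beta> \<le> nn_distortion \<alpha>"
  proof (rule nn_distortion_mono)
    fix x assume "x \<in> Jset"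
    then show "min_sqdist \<beta> x \<le> min_sqdist \<alpha> x"
      using cover \<alpha> \<beta> min_sqdist_le_of_cover unfolding \<beta>_def by blast
  qed
  obtain p where "nn_distortion (insert p \<beta>) < nn_distortion \<beta>"
    using nn_distortion_insert_less[OF \<beta>] .
  moreover have "card (insert p \<beta>) \<le> n"
    using card_insert_Diff_le[OF \<alpha>(1) a, of p] \<alpha>(3) unfolding \<beta>_def by simp
  ultimately show False
    using optimal_nn_distortion_le[OF opt, of "insert p \<beta>"] le \<beta> by simp
qed

section \<open>Location of the points of an optimal set\<close>

text \<open>Let \<open>a'\<close> be the next point of \<open>\<alpha>\<close> to the right of \<open>a\<close>. If \<open>(a + a')/2 \<le> t\<close>, then \<open>a\<close> is
  redundant; otherwise \<open>a\<close> is the point of \<open>\<alpha>\<close> nearest to a piece of the support just right of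
  \<open>t\<close>, and moving it to \<open>t\<close> gains \<open>(t - a)\<^sup>2\<close> there.\<close>

lemma optimal_no_point_left_of:
  assumes opt: "optimal_n_means P n \<alpha>" and a: "a \<in> \<alpha>" "a < t"
    and support: "\<And>w. t < w \<Longrightarrow> \<exists>m u v. 1 \<le> m \<and> {u..v} \<subseteq> J m \<and> t \<le> u \<and> u < v \<and> v \<le> w"
    and cover: "\<And>x. x \<in> Jset \<Longrightarrow> x < t \<Longrightarrow> \<exists>b\<in>\<alpha> - {a}. (x - b)\<^sup>2 \<le> (x - a)\<^sup>2"
  shows False
proof -
  have fin: "finite \<alpha>" using opt unfolding optimal_n_means_def by auto
  define E where "E = {a'\<in>\<alpha>. a < a'}"
  show False
  proof (cases "\<exists>a'\<in>E. (a + a')/2 \<le> t")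
    case True
    then obtain a' where a': "a' \<in> \<alpha>" "a < a'" "(a + a')/2 \<le> t" unfolding E_def by auto
    show False
    proof (rule optimal_point_not_redundant[OF opt a(1)])
      fix x assume x: "x \<in> Jset"
      show "\<exists>b\<in>\<alpha> - {a}. (x - b)\<^sup>2 \<le> (x - a)\<^sup>2"
      proof (cases "x < t")
        case False
        then have "(x - a')\<^sup>2 \<le> (x - a)\<^sup>2" using a' by (intro sq_dist_le_of_midpoint_le) auto
        then show ?thesis using a' by auto
      qed (use cover x in auto)
    qed
  next
    case False
    define w where "w = Min (insert (t + 1) ((\<lambda>a'. (a + a')/2) ` E))"
    have "t < w" using False fin unfolding w_def E_def by auto
    then obtain m u v where uv: "1 \<le> m" "{u..v} \<subseteq> J m" "t \<le> u" "u < v" "v \<le> w"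
      using support by blast
    have w_le: "w \<le> (a + a')/2" if "a' \<in> E" for a'
      using fin that unfolding w_def E_def by (intro Min_le) auto
    show False
    proof (rule optimal_point_not_replaceable[OF opt a(1) _ uv(1,2,4), of t "(t - a)\<^sup>2"])
      fix x assume x: "x \<in> Jset"
      show "\<exists>b\<in>insert t (\<alpha> - {a}). (x - b)\<^sup>2 \<le> (x - a)\<^sup>2"
      proof (cases "x < t")
        case False
        then have "(x - t)\<^sup>2 \<le> (x - a)\<^sup>2" using a by (intro sq_dist_le_of_midpoint_le) auto
        then show ?thesis by blast
      qed (use cover x in auto)
    next
      fix x a' assume x: "x \<in> {u..v}" and a': "a' \<in> \<alpha>"
      show "(x - a)\<^sup>2 \<le> (x - a')\<^sup>2"
      proof (cases "a' \<le> a")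
        case False
        then have "x \<le> (a + a')/2" using w_le[of a'] a' x uv(5) unfolding E_def by auto
        then show ?thesis using False by (intro sq_dist_le_of_le_midpoint) auto
      qed (use x uv(3) a in \<open>auto intro: sq_dist_le_of_midpoint_le\<close>)
    next
      fix x assume "x \<in> {u..v}"
      then have "0 \<le> (x - t) * (t - a)" using uv(3) a by simp
      then show "(x - t)\<^sup>2 + (t - a)\<^sup>2 \<le> (x - a)\<^sup>2" by (simp add: power2_eq_square algebra_simps)
    qed (use a in simp)
  qed
qed

lemma optimal_no_point_right_of:
  assumes opt: "optimal_n_means P n \<alpha>" and a: "a \<in> \<alpha>" "t < a"
    and support: "\<And>w. w < t \<Longrightarrow> \<exists>m u v. 1 \<le> m \<and> {u..v} \<subseteq> J m \<and> w \<le> u \<and> u < v \<and> v \<le> t"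
    and cover: "\<And>x. x \<in> Jset \<Longrightarrow> t < x \<Longrightarrow> \<exists>b\<in>\<alpha> - {a}. (x - b)\<^sup>2 \<le> (x - a)\<^sup>2"
  shows False
proof -
  have fin: "finite \<alpha>" using opt unfolding optimal_n_means_def by auto
  define E where "E = {a'\<in>\<alpha>. a' < a}"
  show False
  proof (cases "\<exists>a'\<in>E. t \<le> (a' + a)/2")
    case True
    then obtain a' where a': "a' \<in> \<alpha>" "a' < a" "t \<le> (a' + a)/2" unfolding E_def by auto
    show False
    proof (rule optimal_point_not_redundant[OF opt a(1)])
      fix x assume x: "x \<in> Jset"
      show "\<exists>b\<in>\<alpha> - {a}. (x - b)\<^sup>2 \<le> (x - a)\<^sup>2"
      proof (cases "t < x")
        case False
        then have "(x - a')\<^sup>2 \<le> (x - a)\<^sup>2" using a' by (intro sq_dist_le_of_le_midpoint) auto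
        then show ?thesis using a' by auto
      qed (use cover x in auto)
    qed
  next
    case False
    define w where "w = Max (insert (t - 1) ((\<lambda>a'. (a' + a)/2) ` E))"
    have "w < t" using False fin unfolding w_def E_def by auto
    then obtain m u v where uv: "1 \<le> m" "{u..v} \<subseteq> J m" "w \<le> u" "u < v" "v \<le> t"
      using support by blast
    have w_ge: "(a' + a)/2 \<le> w" if "a' \<in> E" for a'
      using fin that unfolding w_def E_def by (intro Max_ge) auto
    show False
    proof (rule optimal_point_not_replaceable[OF opt a(1) _ uv(1,2,4), of t "(a - t)\<^sup>2"])
      fix x assume x: "x \<in> Jset"
      show "\<exists>b\<in>insert t (\<alpha> - {a}). (x - b)\<^sup>2 \<le> (x - a)\<^sup>2"
      proof (cases "t < x")
        case False
        then have "(x - t)\<^sup>2 \<le> (x - a)\<^sup>2" using a by (intro sq_dist_le_of_le_midpoint) auto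
        then show ?thesis by blast
      qed (use cover x in auto)
    next
      fix x a' assume x: "x \<in> {u..v}" and a': "a' \<in> \<alpha>"
      show "(x - a)\<^sup>2 \<le> (x - a')\<^sup>2"
      proof (cases "a \<le> a'")
        case False
        then have "(a' + a)/2 \<le> x" using w_ge[of a'] a' x uv(3) unfolding E_def by auto
        then show ?thesis using False by (intro sq_dist_le_of_midpoint_le) auto
      qed (use x uv(5) a in \<open>auto intro: sq_dist_le_of_le_midpoint\<close>)
    next
      fix x assume "x \<in> {u..v}"
      then have "0 \<le> (t - x) * (a - t)" using uv(5) a by simp
      then show "(x - t)\<^sup>2 + (a - t)\<^sup>2 \<le> (x - a)\<^sup>2" by (simp add: power2_eq_square algebra_simps)
    qed (use a in simp)
  qed
qed

lemma optimal_ge_0: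
  assumes "optimal_n_means P n \<alpha>" "a \<in> \<alpha>" shows "0 \<le> a"
proof (rule ccontr)
  assume "\<not> 0 \<le> a"
  then have "a < 0" by simp
  show False
  proof (rule optimal_no_point_left_of[OF assms \<open>a < 0\<close>])
    fix w :: real assume "0 < w"
    then have "{0..min w (1/3)} \<subseteq> J 1" "0 < min w (1/3)" unfolding J_1 by auto
    then show "\<exists>m u v. 1 \<le> m \<and> {u..v} \<subseteq> J m \<and> 0 \<le> u \<and> u < v \<and> v \<le> w"
      by (metis min.cobounded1 order_refl)
  qed (use Jset_subset in force)
qed

lemma optimal_le_1:
  assumes "optimal_n_means P n \<alpha>" "a \<in> \<alpha>" shows "a \<le> 1"
proof (rule ccontr)
  assume "\<not> a \<le> 1"
  then have "1 < a" by simp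
  show False
  proof (rule optimal_no_point_right_of[OF assms \<open>1 < a\<close>])
    fix w :: real assume "w < 1"
    then obtain k where k: "(1/3::real) ^ k < 1 - w" using real_arch_pow_inv[of "1 - w" "1/3"] by auto
    have "{1 - 1/3 ^ k .. 1 - 2/3 ^ Suc k} \<subseteq> J (Suc k)" "1 \<le> Suc k" unfolding J_def by simp_all
    moreover have "w \<le> 1 - 1/3 ^ k" using k by (simp add: power_divide)
    moreover have "(1::real) - 1/3 ^ k < 1 - 2/3 ^ Suc k" by (simp add: field_simps)
    moreover have "1 - 2/3 ^ Suc k \<le> (1::real)" by simp
    ultimately show "\<exists>m u v. 1 \<le> m \<and> {u..v} \<subseteq> J m \<and> w \<le> u \<and> u < v \<and> v \<le> 1"
      by blast
  qed (use Jset_subset in force)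
qed

lemma optimal_no_point_in_upper_gap:
  assumes opt: "optimal_n_means P n \<alpha>" "4 \<le> n" and c: "c \<in> \<alpha>" "1/2 \<le> c" "c < 2/3"
  shows False
proof (cases "\<exists>s\<in>\<alpha>. 1/6 \<le> s \<and> s < c")
  case True
  then obtain s where s: "s \<in> \<alpha>" "1/6 \<le> s" "s < c" by blast
  show False
  proof (rule optimal_no_point_left_of[OF opt(1) c(1) \<open>c < 2/3\<close>])
    fix w :: real assume "2/3 < w"
    then have "{2/3..min w (7/9)} \<subseteq> J 2" "2/3 < min w (7/9)" unfolding J_2 by auto
    then show "\<exists>m u v. 1 \<le> m \<and> {u..v} \<subseteq> J m \<and> 2/3 \<le> u \<and> u < v \<and> v \<le> w"
      by (metis min.cobounded1 order_refl one_le_numeral)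
  next
    fix x assume "x \<in> Jset" "x < 2/3"
    then have "x \<le> (s + c)/2" using Jset_subset s c by auto
    then have "(x - s)\<^sup>2 \<le> (x - c)\<^sup>2" using s by (intro sq_dist_le_of_le_midpoint) auto
    then show "\<exists>b\<in>\<alpha> - {c}. (x - b)\<^sup>2 \<le> (x - c)\<^sup>2" using s by auto
  qed
next
  case False
  have "(3/2) ^ 1 * ((1/3 - 1/6) ^ 3 - (1/6 - 1/6) ^ 3) / 3 \<le> (17/7776::real)"
  proof (rule optimal_dominated_interval_bound[OF opt])
    fix x a :: real assume x: "x \<in> {1/6..1/3}" and a: "a \<in> \<alpha>"
    then consider "a < 1/6" | "c \<le> a" using False by force
    then show "(x - 1/6)\<^sup>2 \<le> (x - a)\<^sup>2"
    proof cases
      case 1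
      then show ?thesis using x by (intro sq_dist_le_of_midpoint_le) auto
    next
      case 2
      then show ?thesis using x c by (intro sq_dist_le_of_le_midpoint) auto
    qed
  qed (auto simp: J_def)
  then show False by (simp add: power3_eq_cube)
qed

lemma optimal_no_point_in_lower_gap:
  assumes opt: "optimal_n_means P n \<alpha>" "4 \<le> n" and c: "c \<in> \<alpha>" "1/3 < c" "c < 1/2"
  shows False
proof (cases "\<exists>e\<in>\<alpha>. c < e \<and> e \<le> 5/6")
  case True
  then obtain e where e: "e \<in> \<alpha>" "c < e" "e \<le> 5/6" by blast
  show False
  proof (rule optimal_no_point_right_of[OF opt(1) c(1) \<open>1/3 < c\<close>])
    fix w :: real assume "w < 1/3"
    then have "{max w 0..1/3} \<subseteq> J 1" "max w 0 < 1/3" unfolding J_1 by auto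
    then show "\<exists>m u v. 1 \<le> m \<and> {u..v} \<subseteq> J m \<and> w \<le> u \<and> u < v \<and> v \<le> 1/3"
      by (metis max.cobounded1 order_refl)
  next
    fix x assume "x \<in> Jset" "1/3 < x"
    then have "(c + e)/2 \<le> x" using Jset_subset e c by auto
    then have "(x - e)\<^sup>2 \<le> (x - c)\<^sup>2" using e by (intro sq_dist_le_of_midpoint_le) auto
    then show "\<exists>b\<in>\<alpha> - {c}. (x - b)\<^sup>2 \<le> (x - c)\<^sup>2" using e by auto
  qed
next
  case False
  have "(3/2) ^ 2 * ((7/9 - 5/6) ^ 3 - (2/3 - 5/6) ^ 3) / 3 \<le> (17/7776::real)"
  proof (rule optimal_dominated_interval_bound[OF opt])
    fix x a :: real assume x: "x \<in> {2/3..7/9}" and a: "a \<in> \<alpha>"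
    then consider "a \<le> c" | "5/6 < a" using False by force
    then show "(x - 5/6)\<^sup>2 \<le> (x - a)\<^sup>2"
    proof cases
      case 1
      then show ?thesis using x c by (intro sq_dist_le_of_midpoint_le) auto
    next
      case 2
      then show ?thesis using x by (intro sq_dist_le_of_le_midpoint) auto
    qed
  qed (auto simp: J_2)
  then show False by (simp add: power3_eq_cube power2_eq_square)
qed

lemma optimal_subset:
  assumes "optimal_n_means P n \<alpha>" "4 \<le> n"
  shows "\<alpha> \<subseteq> {0..1/3} \<union> {2/3..1}"
proof
  fix a assume a: "a \<in> \<alpha>"
  have "0 \<le> a" "a \<le> 1" using optimal_ge_0 optimal_le_1 assms(1) a by auto
  moreover have "\<not> (1/3 < a \<and> a < 2/3)"
    using optimal_no_point_in_upper_gap[OF assms a] optimal_no_point_in_lower_gap[OF assms a]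
    by (cases "1/2 \<le> a") auto
  ultimately show "a \<in> {0..1/3} \<union> {2/3..1}" by auto
qed

lemma optimal_card_J_1_ge_2:
  assumes opt: "optimal_n_means P n \<alpha>" "4 \<le> n"
  shows "2 \<le> card (\<alpha> \<inter> J 1)"
proof (rule ccontr)
  assume "\<not> 2 \<le> card (\<alpha> \<inter> J 1)"
  moreover have "finite \<alpha>" using opt unfolding optimal_n_means_def by auto
  moreover have "a \<le> 2*0 - 1/3 \<or> 2*(1/3) - 0 \<le> a" if "a \<in> \<alpha>" "a \<notin> {0..1/3}" for a
    using that optimal_subset[OF opt] by auto
  ultimately obtain b where dom: "\<And>x a. x \<in> {0..1/3} \<Longrightarrow> a \<in> \<alpha> \<Longrightarrow> (x - b)\<^sup>2 \<le> (x - a)\<^sup>2"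
    using dominating_point_exists[of \<alpha> 0 "1/3"] unfolding J_1 by auto
  have "(3/2) ^ 1 * ((1/3 - b) ^ 3 - (0 - b) ^ 3) / 3 \<le> (17/7776::real)"
    using dom by (intro optimal_dominated_interval_bound[OF opt]) (auto simp: J_def)
  moreover have "(3/2) ^ 1 * ((1/3 - b) ^ 3 - (0 - b) ^ 3) / 3 = (b - 1/6)\<^sup>2 / 2 + (1/216::real)"
    by (simp add: power2_eq_square power3_eq_cube field_simps)
  ultimately show False using zero_le_power2[of "b - 1/6"] by linarith
qed

lemma optimal_card_upper_ge_2:
  assumes opt: "optimal_n_means P n \<alpha>" "4 \<le> n"
  shows "2 \<le> card (\<alpha> \<inter> {2/3..1})"
proof (rule ccontr)
  assume "\<not> 2 \<le> card (\<alpha> \<inter> {2/3..1})"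
  moreover have \<alpha>: "finite \<alpha>" "\<alpha> \<noteq> {}" using opt unfolding optimal_n_means_def by auto
  moreover have "a \<le> 2*(2/3) - 1 \<or> 2*1 - 2/3 \<le> a" if "a \<in> \<alpha>" "a \<notin> {2/3..1}" for a
    using that optimal_subset[OF opt] by auto
  ultimately obtain b where dom: "\<And>x a. x \<in> {2/3..1} \<Longrightarrow> a \<in> \<alpha> \<Longrightarrow> (x - b)\<^sup>2 \<le> (x - a)\<^sup>2"
    using dominating_point_exists[of \<alpha> "2/3" 1] by auto
  define I2 where "I2 = (3/2) ^ 2 * ((7/9 - b) ^ 3 - (2/3 - b) ^ 3) / 3"
  define I3 where "I3 = (3/2) ^ 3 * ((25/27 - b) ^ 3 - (8/9 - b) ^ 3) / 3"
  have "ennreal I2 = (\<integral>\<^sup>+x\<in>{2/3..7/9}. ennreal (dens x * (x - b)\<^sup>2) \<partial>lborel)"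
    unfolding I2_def by (rule set_nn_integral_dens_sq[symmetric]) (auto simp: J_2)
  moreover have "ennreal I3 = (\<integral>\<^sup>+x\<in>{8/9..25/27}. ennreal (dens x * (x - b)\<^sup>2) \<partial>lborel)"
    unfolding I3_def by (rule set_nn_integral_dens_sq[symmetric]) (auto simp: J_3)
  ultimately have "ennreal I2 + ennreal I3
      = (\<integral>\<^sup>+x\<in>{2/3..7/9} \<union> {8/9..25/27}. ennreal (dens x * (x - b)\<^sup>2) \<partial>lborel)"
    by (simp add: nn_integral_disjoint_pair)
  also have "\<dots> \<le> nn_distortion \<alpha>"
    using \<alpha> dom by (intro nn_distortion_ge min_sqdist_greatest) auto
  also have "\<dots> \<le> ennreal (17/7776)"
    using opt by (rule optimal_nn_distortion_le_bound)
  finally have "ennreal (I2 + I3) \<le> ennreal (17/7776)"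
    using power_mono_odd[of 3 "2/3 - b" "7/9 - b"] power_mono_odd[of 3 "8/9 - b" "25/27 - b"]
    unfolding I2_def I3_def by (simp add: ennreal_plus)
  then have "I2 + I3 \<le> 17/7776" by (simp add: ennreal_le_iff)
  moreover have "I2 + I3 = 3/8 * (b - 127/162)\<^sup>2 + 73/23328"
    unfolding I2_def I3_def by (simp add: power2_eq_square power3_eq_cube field_simps)
  ultimately show False using zero_le_power2[of "b - 127/162"] by linarith
qed

theorem proposition4p4:
  fixes n :: nat and \<alpha> :: "real set"
  assumes "n \<ge> 4" and "optimal_n_means P n \<alpha>"
  shows "card (\<alpha> \<inter> J 1) \<ge> 2 \<and> card (\<alpha> \<inter> {2/3..1}) \<ge> 2"
  using optimal_card_J_1_ge_2 optimal_card_upper_ge_2 assms by blast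

end
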